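(* Let $g:\mathbb{R}^d\to\mathbb{R}$ be $p$ times differentiable ($p\ge1$) with $\nabla^pg$ being $L_p$-Lipschitz, and let $L\ge0$. Define $\mathcal T(x)$ to be a minimizer (assumed to exist) of $y\mapsto g_p(y;x)+\frac{L_p+L}{p!}\|y-x\|^{p+1}$, where $g_p(y;x)$ is the $p$-th order Taylor approximation of $g$ about $x$ evaluated at $y$. Then $\mathcal T$ is a $\big((1+p)^{-1}(1+L/L_p)^{-1},\,0\big)$-approximate $\omega$-proximal step oracle for $g$ with $\omega(s)=\frac{(L_p+L)(p+1)}{p!}s^{p-1}$.
   Context: An $(\alpha,\delta)$-approximate $\omega$-proximal step oracle for $g$ is a procedure that, queried at any $x\in\mathbb{R}^d$, returns some $y$ with $\|\nabla g(y)+\omega(\|y-x\|)(y-x)\|\le\alpha\,\omega(\|y-x\|)\|y-x\|+\delta$. *)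

theory Defs
  imports "HOL-Analysis.Analysis"
begin

text \<open>Higher derivatives of g : R^d -> R are represented by a family D, where
 D k x h is the k-th Frechet derivative of g at x applied to the vectors h 0, ..., h (k-1).\<close>
definition higher_derivs ::
  "('a::euclidean_space \<Rightarrow> real) \<Rightarrow> nat \<Rightarrow> (nat \<Rightarrow> 'a \<Rightarrow> (nat \<Rightarrow> 'a) \<Rightarrow> real) \<Rightarrow> bool" where
  "higher_derivs g p D \<longleftrightarrow>
     (\<forall>x h. D 0 x h = g x) \<and>
     (\<forall>k<p. \<forall>x h. ((\<lambda>z. D k z h) has_derivative (\<lambda>v. D (Suc k) x (h(k := v)))) (at x))"

definition pth_deriv_lipschitz ::
  "nat \<Rightarrow> (nat \<Rightarrow> 'a::euclidean_space \<Rightarrow> (nat \<Rightarrow> 'a) \<Rightarrow> real) \<Rightarrow> real \<Rightarrow> bool" where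
  "pth_deriv_lipschitz p D Lp \<longleftrightarrow>
     (\<forall>x y h. \<bar>D p x h - D p y h\<bar> \<le> Lp * norm (x - y) * (\<Prod>i<p. norm (h i)))"

definition taylor_approx ::
  "nat \<Rightarrow> (nat \<Rightarrow> 'a::euclidean_space \<Rightarrow> (nat \<Rightarrow> 'a) \<Rightarrow> real) \<Rightarrow> 'a \<Rightarrow> 'a \<Rightarrow> real" where
  "taylor_approx p D y x = (\<Sum>k\<le>p. D k x (\<lambda>_. y - x) / fact k)"

definition gradient :: "('a::euclidean_space \<Rightarrow> real) \<Rightarrow> 'a \<Rightarrow> 'a" where
  "gradient g y = (SOME v. (g has_derivative (\<lambda>h. v \<bullet> h)) (at y))"

definition approx_prox_oracle ::
  "('a::euclidean_space \<Rightarrow> real) \<Rightarrow> (real \<Rightarrow> real) \<Rightarrow> real \<Rightarrow> real \<Rightarrow> ('a \<Rightarrow> 'a) \<Rightarrow> bool" where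
  "approx_prox_oracle g \<omega> \<alpha> \<delta> T \<longleftrightarrow>
     (\<forall>x. let y = T x in
        norm (gradient g y + \<omega> (norm (y - x)) *\<^sub>R (y - x))
          \<le> \<alpha> * \<omega> (norm (y - x)) * norm (y - x) + \<delta>)"

end

theory Submission
  imports Defs
begin

text \<open>Write y = T x, u = y - x and w = omega(norm u). Differentiating the regularised
  Taylor model at its minimiser y in a direction v shows that w (u \<bullet> v) cancels the
  degree p - 1 Taylor expansion about x of gradient g y \<bullet> v along the segment from x to y.
  Since the p-th derivative is Lp-Lipschitz, that expansion is exact up to
  Lp (norm u)^p (norm v) / p!, hence norm (gradient g y + w u) \<le> Lp (norm u)^p / p!, which is
  alpha w (norm u) for the stated alpha. Differentiating the model along a line needs the
  higher derivatives to be symmetric, and this reduces to the symmetry of second derivatives.\<close>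

lemma has_real_derivative_power_over_fact:
  "((\<lambda>t::real. c * t ^ Suc n / fact (Suc n)) has_real_derivative c * t ^ n / fact n) (at t)"
proof -
  have "((\<lambda>t::real. c * t ^ Suc n / fact (Suc n)) has_real_derivative c * (real (Suc n) * t ^ n) / fact (Suc n)) (at t)"
    using DERIV_pow[of "Suc n" t UNIV] by (intro DERIV_cdivide DERIV_cmult) simp
  moreover have "c * (real (Suc n) * t ^ n) / fact (Suc n) = c * t ^ n / fact n"
    by (simp add: fact_Suc field_simps del: of_nat_Suc)
  ultimately show ?thesis by simp
qed

lemma abs_le_power_over_fact_if_deriv_le:
  fixes F F' :: "real \<Rightarrow> real"
  assumes "F 0 = 0" and F': "\<And>s. (F has_real_derivative F' s) (at s)"
    and bound: "\<And>s. 0 \<le> s \<Longrightarrow> s \<le> 1 \<Longrightarrow> \<bar>F' s\<bar> \<le> K * s ^ n / fact n"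
    and s: "0 \<le> s" "s \<le> 1"
  shows "\<bar>F s\<bar> \<le> K * s ^ Suc n / fact (Suc n)"
proof -
  define P where "P t = K * t ^ Suc n / fact (Suc n)" for t
  have P': "(P has_real_derivative K * t ^ n / fact n) (at t)" for t
    unfolding P_def by (rule has_real_derivative_power_over_fact)
  have cont: "continuous_on {0..s} F" "continuous_on {0..s} P"
    using F' P' by (meson DERIV_isCont continuous_at_imp_continuous_on)+
  have "P 0 - F 0 \<le> P s - F s"
  proof (rule DERIV_nonneg_imp_increasing_open[OF s(1)])
    fix t assume "0 < t" "t < s"
    then show "\<exists>y. ((\<lambda>t. P t - F t) has_real_derivative y) (at t) \<and> 0 \<le> y"
      using P' F' bound[of t] s by (intro exI[of _ "K * t ^ n / fact n - F' t"]) (auto intro: DERIV_diff)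
  qed (use cont in \<open>auto intro: continuous_on_diff\<close>)
  moreover have "P 0 + F 0 \<le> P s + F s"
  proof (rule DERIV_nonneg_imp_increasing_open[OF s(1)])
    fix t assume "0 < t" "t < s"
    then show "\<exists>y. ((\<lambda>t. P t + F t) has_real_derivative y) (at t) \<and> 0 \<le> y"
      using P' F' bound[of t] s by (intro exI[of _ "K * t ^ n / fact n + F' t"]) (auto intro: DERIV_add)
  qed (use cont in \<open>auto intro: continuous_on_add\<close>)
  ultimately show ?thesis using assms(1) by (auto simp: P_def)
qed

text \<open>The Lipschitz bound is integrated n + 1 times; the mean-value form of the remainder
  would lose a factor n + 1.\<close>

lemma taylor_remainder_lipschitz:
  fixes f :: "nat \<Rightarrow> real \<Rightarrow> real"
  assumes "\<And>j s. j < n \<Longrightarrow> (f j has_real_derivative f (Suc j) s) (at s)"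
    and "\<And>s. 0 \<le> s \<Longrightarrow> s \<le> 1 \<Longrightarrow> \<bar>f n s - f n 0\<bar> \<le> K * s"
    and "0 \<le> s" "s \<le> 1"
  shows "\<bar>f 0 s - (\<Sum>j\<le>n. f j 0 * s ^ j / fact j)\<bar> \<le> K * s ^ Suc n / fact (Suc n)"
  using assms
proof (induction n arbitrary: f s)
  case 0
  then show ?case by simp
next
  case (Suc n)
  define F where "F t = f 0 t - (\<Sum>j\<le>Suc n. f j 0 * t ^ j / fact j)" for t
  define F' where "F' t = f 1 t - (\<Sum>j\<le>n. f (Suc j) 0 * t ^ j / fact j)" for t
  have F_shift: "F t = f 0 t - f 0 0 - (\<Sum>j\<le>n. f (Suc j) 0 * t ^ Suc j / fact (Suc j))" for t
    unfolding F_def by (simp add: sum.atMost_Suc_shift del: sum.atMost_Suc)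
  have "(F has_real_derivative f 1 t - 0 - (\<Sum>j\<le>n. f (Suc j) 0 * t ^ j / fact j)) (at t)" for t
    unfolding F_shift[abs_def] using Suc.prems(1)[of 0 t]
    by (intro DERIV_diff DERIV_sum DERIV_const has_real_derivative_power_over_fact) simp_all
  then have "(F has_real_derivative F' t) (at t)" for t
    unfolding F'_def by simp
  moreover have "\<bar>F' t\<bar> \<le> K * t ^ Suc n / fact (Suc n)" if "0 \<le> t" "t \<le> 1" for t
    using Suc.IH[of "\<lambda>j. f (Suc j)" t] Suc.prems that by (auto simp: F'_def)
  ultimately have "\<bar>F s\<bar> \<le> K * s ^ Suc (Suc n) / fact (Suc (Suc n))"
    by (intro abs_le_power_over_fact_if_deriv_le[of F F']) (use Suc.prems in \<open>auto simp: F_def\<close>)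
  then show ?case unfolding F_def .
qed

lemma second_difference_estimate:
  fixes f :: "'a::real_normed_vector \<Rightarrow> real"
  assumes f': "\<And>z. (f has_derivative f' z) (at z)"
    and B: "((\<lambda>z. f' z a) has_derivative B) (at x)"
    and e: "e > 0"
  shows "\<exists>d>0. \<forall>s. 0 < s \<and> s < d \<longrightarrow>
     \<bar>(f (x + s *\<^sub>R a + s *\<^sub>R b) - f (x + s *\<^sub>R a) - f (x + s *\<^sub>R b) + f x) - s\<^sup>2 * B b\<bar>
        \<le> e * s\<^sup>2 * (2 * norm a + norm b)"
proof -
  let ?G = "\<lambda>z. f' z a"
  have "linear B" using B by (rule has_derivative_linear)
  from B e obtain d0 where "d0 > 0"
    and d0: "\<And>y. norm (y - x) < d0 \<Longrightarrow> norm (?G y - ?G x - B (y - x)) \<le> e * norm (y - x)"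
    unfolding has_derivative_at_alt by blast
  have "norm a + norm b + 1 > 0" by (simp add: add_nonneg_pos)
  define d where "d = d0 / (norm a + norm b + 1)"
  have "d > 0" using \<open>d0 > 0\<close> \<open>norm a + norm b + 1 > 0\<close> by (simp add: d_def)
  moreover have "\<bar>(f (x + s *\<^sub>R a + s *\<^sub>R b) - f (x + s *\<^sub>R a) - f (x + s *\<^sub>R b) + f x) - s\<^sup>2 * B b\<bar>
        \<le> e * s\<^sup>2 * (2 * norm a + norm b)" if s: "0 < s" "s < d" for s
  proof -
    have s_small: "s * (norm a + norm b) < d0"
    proof -
      have "s * (norm a + norm b) \<le> s * (norm a + norm b + 1)" using s by simp
      also have "\<dots> < d * (norm a + norm b + 1)"
        using s by (intro mult_strict_right_mono) (auto simp: add_nonneg_pos)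
      also have "\<dots> = d0" using \<open>norm a + norm b + 1 > 0\<close> by (simp add: d_def)
      finally show ?thesis .
    qed
    define \<phi> where "\<phi> t = f (x + t *\<^sub>R a + s *\<^sub>R b) - f (x + t *\<^sub>R a)" for t
    have f'_scale: "f' z (t *\<^sub>R a) = t * ?G z" for z t
      using linear_scale[OF has_derivative_linear[OF f'[of z]], of t a] by simp
    have \<phi>': "(\<phi> has_real_derivative (?G (x + t *\<^sub>R a + s *\<^sub>R b) - ?G (x + t *\<^sub>R a))) (at t)" for t
    proof -
      have "((\<lambda>t. x + t *\<^sub>R a + s *\<^sub>R b) has_derivative (\<lambda>h. h *\<^sub>R a)) (at t)"
           "((\<lambda>t. x + t *\<^sub>R a) has_derivative (\<lambda>h. h *\<^sub>R a)) (at t)"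
        by (auto intro!: derivative_eq_intros)
      then have "(\<phi> has_derivative (\<lambda>h. f' (x + t *\<^sub>R a + s *\<^sub>R b) (h *\<^sub>R a) - f' (x + t *\<^sub>R a) (h *\<^sub>R a))) (at t)"
        unfolding \<phi>_def[abs_def] by (intro has_derivative_diff has_derivative_compose[OF _ f'])
      then show ?thesis unfolding has_field_derivative_def f'_scale
        by (rule has_derivative_eq_rhs) (auto simp: fun_eq_iff algebra_simps)
    qed
    obtain \<xi> where \<xi>: "0 < \<xi>" "\<xi> < s"
      and mvt: "\<phi> s - \<phi> 0 = (s - 0) * (?G (x + \<xi> *\<^sub>R a + s *\<^sub>R b) - ?G (x + \<xi> *\<^sub>R a))"
      using MVT2[of 0 s \<phi>, OF s(1) \<phi>'] by blast
    define z1 where "z1 = x + \<xi> *\<^sub>R a + s *\<^sub>R b"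
    define z2 where "z2 = x + \<xi> *\<^sub>R a"
    have "norm (z1 - x) \<le> s * (norm a + norm b)"
    proof -
      have "norm (z1 - x) \<le> norm (\<xi> *\<^sub>R a) + norm (s *\<^sub>R b)" unfolding z1_def
        by (metis add_diff_cancel_left' add.assoc norm_triangle_ineq)
      also have "\<dots> \<le> s * norm a + s * norm b" using \<xi> s
        by (auto intro!: add_mono mult_right_mono)
      finally show ?thesis by (simp add: algebra_simps)
    qed
    then have err1: "\<bar>?G z1 - ?G x - B (z1 - x)\<bar> \<le> e * (s * (norm a + norm b))"
      using d0[of z1] s_small e by (auto intro: order_trans mult_left_mono)
    have "norm (z2 - x) \<le> s * norm a" "s * norm a \<le> s * (norm a + norm b)"
      unfolding z2_def using \<xi> s by (auto intro!: mult_right_mono mult_left_mono)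
    then have err2: "\<bar>?G z2 - ?G x - B (z2 - x)\<bar> \<le> e * (s * norm a)"
      using d0[of z2] s_small e by (auto intro: order_trans mult_left_mono)
    have "B (z1 - x) - B (z2 - x) = s * B b"
      using linear_diff[OF \<open>linear B\<close>] linear_scale[OF \<open>linear B\<close>]
      by (metis z1_def z2_def add_diff_cancel_left' add_diff_eq diff_diff_eq2 real_scaleR_def)
    then have "s * (?G z1 - ?G z2) - s\<^sup>2 * B b
        = s * ((?G z1 - ?G x - B (z1 - x)) - (?G z2 - ?G x - B (z2 - x)))"
      by (simp add: power2_eq_square algebra_simps)
    then have "\<bar>s * (?G z1 - ?G z2) - s\<^sup>2 * B b\<bar>
        = s * \<bar>(?G z1 - ?G x - B (z1 - x)) - (?G z2 - ?G x - B (z2 - x))\<bar>"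
      using s by (simp add: abs_mult)
    also have "\<dots> \<le> s * (e * (s * (norm a + norm b)) + e * (s * norm a))"
      using err1 err2 s by (intro mult_left_mono) auto
    also have "\<dots> = e * s\<^sup>2 * (2 * norm a + norm b)" by (simp add: power2_eq_square algebra_simps)
    finally show ?thesis using mvt unfolding \<phi>_def z1_def z2_def by simp
  qed
  ultimately show ?thesis by blast
qed

lemma second_derivative_symmetric:
  fixes f :: "'a::real_normed_vector \<Rightarrow> real"
  assumes f': "\<And>z. (f has_derivative f' z) (at z)"
    and B: "\<And>a. ((\<lambda>z. f' z a) has_derivative B a) (at x)"
  shows "B a b = B b a"
proof -
  define C where "C = 3 * (norm a + norm b) + 1"
  have "C > 0" by (simp add: C_def add_nonneg_pos)
  have "\<bar>B a b - B b a\<bar> \<le> 0 + e" if "e > 0" for e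
  proof -
    have "e / C > 0" using \<open>C > 0\<close> \<open>e > 0\<close> by simp
    obtain d1 where "d1 > 0" and d1: "\<And>s. 0 < s \<Longrightarrow> s < d1 \<Longrightarrow>
      \<bar>(f (x + s *\<^sub>R a + s *\<^sub>R b) - f (x + s *\<^sub>R a) - f (x + s *\<^sub>R b) + f x) - s\<^sup>2 * B a b\<bar>
        \<le> e / C * s\<^sup>2 * (2 * norm a + norm b)"
      using second_difference_estimate[OF f' B \<open>e / C > 0\<close>, of a b] by blast
    obtain d2 where "d2 > 0" and d2: "\<And>s. 0 < s \<Longrightarrow> s < d2 \<Longrightarrow>
      \<bar>(f (x + s *\<^sub>R b + s *\<^sub>R a) - f (x + s *\<^sub>R b) - f (x + s *\<^sub>R a) + f x) - s\<^sup>2 * B b a\<bar>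
        \<le> e / C * s\<^sup>2 * (2 * norm b + norm a)"
      using second_difference_estimate[OF f' B \<open>e / C > 0\<close>, of b a] by blast
    define s where "s = min d1 d2 / 2"
    have s: "0 < s" "s < d1" "s < d2" using \<open>d1 > 0\<close> \<open>d2 > 0\<close> by (auto simp: s_def)
    have swap: "x + s *\<^sub>R b + s *\<^sub>R a = x + s *\<^sub>R a + s *\<^sub>R b" by (simp add: algebra_simps)
    have "\<bar>s\<^sup>2 * (B a b - B b a)\<bar> \<le> e / C * s\<^sup>2 * (2 * norm a + norm b) + e / C * s\<^sup>2 * (2 * norm b + norm a)"
      using d1[OF s(1,2)] d2[OF s(1,3)] unfolding swap by (simp add: algebra_simps abs_le_iff)
    then have "s\<^sup>2 * \<bar>B a b - B b a\<bar> \<le> e / C * s\<^sup>2 * (2 * norm a + norm b) + e / C * s\<^sup>2 * (2 * norm b + norm a)"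
      by (simp add: abs_mult)
    also have "\<dots> = s\<^sup>2 * e * (3 * (norm a + norm b) / C)"
      using \<open>C > 0\<close> by (simp add: field_simps)
    also have "\<dots> \<le> s\<^sup>2 * e"
      using \<open>C > 0\<close> \<open>e > 0\<close> by (intro mult_left_le) (auto simp: C_def)
    finally show ?thesis using s by simp
  qed
  then show ?thesis using field_le_epsilon[of "\<bar>B a b - B b a\<bar>" 0] by simp
qed

lemma higher_derivs_zero: "higher_derivs g p D \<Longrightarrow> D 0 x h = g x"
  unfolding higher_derivs_def by blast

lemma higher_derivs_has_derivative:
  "higher_derivs g p D \<Longrightarrow> k < p \<Longrightarrow>
     ((\<lambda>z. D k z h) has_derivative (\<lambda>v. D (Suc k) x (h(k := v)))) (at x)"
  unfolding higher_derivs_def by blast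

lemma higher_derivs_unique:
  assumes "higher_derivs g p D" "k < p"
    and "((\<lambda>z. D k z h) has_derivative F) (at x)"
  shows "F = (\<lambda>v. D (Suc k) x (h(k := v)))"
  using has_derivative_unique[OF assms(3) higher_derivs_has_derivative[OF assms(1,2)]] .

lemma higher_derivs_cong:
  assumes hd: "higher_derivs g p D"
  shows "k \<le> p \<Longrightarrow> (\<And>i. i < k \<Longrightarrow> h i = h' i) \<Longrightarrow> D k z h = D k z h'"
proof (induction k arbitrary: z)
  case 0
  then show ?case using higher_derivs_zero[OF hd] by simp
next
  case (Suc k)
  have "(\<lambda>z. D k z h) = (\<lambda>z. D k z h')" using Suc by auto
  then have "(\<lambda>v. D (Suc k) z (h'(k := v))) = (\<lambda>v. D (Suc k) z (h(k := v)))"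
    using higher_derivs_has_derivative[OF hd, of k h' z] Suc.prems
    by (intro higher_derivs_unique[OF hd]) auto
  from fun_cong[OF this, of "h k"] Suc.prems show ?case
    by (metis fun_upd_triv lessI)
qed

lemma higher_derivs_linear:
  assumes hd: "higher_derivs g p D"
  shows "k \<le> p \<Longrightarrow> i < k \<Longrightarrow> linear (\<lambda>a. D k z (h(i := a)))"
proof (induction k arbitrary: z h)
  case 0
  then show ?case by simp
next
  case (Suc k)
  then have "k < p" by simp
  show ?case
  proof (cases "i = k")
    case True
    then show ?thesis
      using higher_derivs_has_derivative[OF hd \<open>k < p\<close>, of h z] has_derivative_linear by blast
  next
    case False
    then have "i < k" using Suc.prems by simp
    have shift: "D (Suc k) z ((h(i := a))(k := h k)) = D (Suc k) z (h(i := a))" for a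
      using False by (metis fun_upd_triv fun_upd_twist fun_upd_upd)
    have lin: "linear (\<lambda>a. D k z (h(i := a)))" for z h
      by (rule Suc.IH) (use Suc.prems \<open>i < k\<close> in auto)
    show ?thesis
    proof (rule linearI)
      fix a b
      have "(\<lambda>z. D k z (h(i := a + b))) = (\<lambda>z. D k z (h(i := a)) + D k z (h(i := b)))"
        using linear_add[OF lin] by simp
      then have "(\<lambda>v. D (Suc k) z ((h(i := a))(k := v)) + D (Suc k) z ((h(i := b))(k := v)))
          = (\<lambda>v. D (Suc k) z ((h(i := a + b))(k := v)))"
        by (intro higher_derivs_unique[OF hd \<open>k < p\<close>])
          (auto intro: has_derivative_add higher_derivs_has_derivative[OF hd \<open>k < p\<close>])
      from fun_cong[OF this, of "h k"] show "D (Suc k) z (h(i := a + b)) = D (Suc k) z (h(i := a)) + D (Suc k) z (h(i := b))"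
        by (simp add: shift)
    next
      fix c a
      have "(\<lambda>z. D k z (h(i := c *\<^sub>R a))) = (\<lambda>z. c * D k z (h(i := a)))"
        using linear_scale[OF lin] by simp
      then have "(\<lambda>v. c * D (Suc k) z ((h(i := a))(k := v))) = (\<lambda>v. D (Suc k) z ((h(i := c *\<^sub>R a))(k := v)))"
        by (intro higher_derivs_unique[OF hd \<open>k < p\<close>])
          (auto intro: has_derivative_mult_right higher_derivs_has_derivative[OF hd \<open>k < p\<close>])
      from fun_cong[OF this, of "h k"] show "D (Suc k) z (h(i := c *\<^sub>R a)) = c *\<^sub>R D (Suc k) z (h(i := a))"
        by (simp add: shift)
    qed
  qed
qed

lemma higher_derivs_swap:
  assumes hd: "higher_derivs g p D"
  shows "k \<le> p \<Longrightarrow> Suc i < k \<Longrightarrow> D k z (h(i := h (Suc i), Suc i := h i)) = D k z h"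
proof (induction k arbitrary: z h)
  case 0
  then show ?case by simp
next
  case (Suc k)
  then have "k < p" by simp
  let ?h' = "h(i := h (Suc i), Suc i := h i)"
  show ?case
  proof (cases "Suc i < k")
    case True
    have "(\<lambda>z. D k z ?h') = (\<lambda>z. D k z h)"
      by (intro ext Suc.IH) (use Suc.prems True in auto)
    then have "(\<lambda>v. D (Suc k) z (h(k := v))) = (\<lambda>v. D (Suc k) z (?h'(k := v)))"
      using higher_derivs_has_derivative[OF hd \<open>k < p\<close>, of h z]
      by (intro higher_derivs_unique[OF hd \<open>k < p\<close>]) simp
    moreover have "?h'(k := h k) = ?h'"
      using True by (auto simp: fun_eq_iff)
    ultimately show ?thesis by (metis fun_upd_triv)
  next
    case False
    then have k: "k = Suc i" using Suc.prems by simp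
    have "(\<lambda>a b. D (Suc (Suc i)) z ((h(i := a))(Suc i := b))) (h (Suc i)) (h i)
        = (\<lambda>a b. D (Suc (Suc i)) z ((h(i := a))(Suc i := b))) (h i) (h (Suc i))"
    proof (rule second_derivative_symmetric[where f = "\<lambda>z'. D i z' h" and f' = "\<lambda>z' a. D (Suc i) z' (h(i := a))"])
      show "((\<lambda>z'. D i z' h) has_derivative (\<lambda>a. D (Suc i) z' (h(i := a)))) (at z')" for z'
        using higher_derivs_has_derivative[OF hd, of i h z'] \<open>k < p\<close> k by simp
      show "((\<lambda>z'. D (Suc i) z' (h(i := a))) has_derivative (\<lambda>b. D (Suc (Suc i)) z ((h(i := a))(Suc i := b)))) (at z)" for a
        using higher_derivs_has_derivative[OF hd, of "Suc i" "h(i := a)" z] \<open>k < p\<close> k by simp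
    qed
    then show ?thesis using k by (simp only: fun_upd_triv)
  qed
qed

lemma higher_derivs_slot_symmetric:
  assumes hd: "higher_derivs g p D"
  shows "k \<le> p \<Longrightarrow> i < k \<Longrightarrow> D k z ((\<lambda>_. u)(i := v)) = D k z ((\<lambda>_. u)(0 := v))"
proof (induction i)
  case 0
  then show ?case by simp
next
  case (Suc i)
  have "((\<lambda>_. u)(Suc i := v))(i := v, Suc i := u) = (\<lambda>_. u)(i := v)"
    by (auto simp: fun_eq_iff)
  then have "D k z ((\<lambda>_. u)(i := v)) = D k z ((\<lambda>_. u)(Suc i := v))"
    using higher_derivs_swap[OF hd \<open>k \<le> p\<close> \<open>Suc i < k\<close>, of z "(\<lambda>_. u)(Suc i := v)"] by simp
  with Suc.IH Suc.prems show ?case by (metis Suc_lessD)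
qed

lemma higher_derivs_shift_has_derivative:
  assumes hd: "higher_derivs g p D" and "k \<le> p"
  shows "finite S \<Longrightarrow> S \<subseteq> {..<k} \<Longrightarrow>
    ((\<lambda>t. D k x (\<lambda>i. if i \<in> S then h i + t *\<^sub>R v i else h i)) has_real_derivative
       (\<Sum>i\<in>S. D k x (h(i := v i)))) (at 0)"
proof (induction S arbitrary: h rule: finite_induct)
  case empty
  then show ?case by simp
next
  case (insert j S)
  define H where "H h t = (\<lambda>i. if i \<in> S then h i + t *\<^sub>R v i else h i)" for h t
  have "j < k" "S \<subseteq> {..<k}" using insert.prems by auto
  have split: "D k x (\<lambda>i. if i \<in> insert j S then h i + t *\<^sub>R v i else h i)
      = D k x (H h t) + t * D k x (H (h(j := v j)) t)" for t
  proof -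
    have lin: "linear (\<lambda>a. D k x ((H h t)(j := a)))"
      using higher_derivs_linear[OF hd \<open>k \<le> p\<close> \<open>j < k\<close>] .
    have "(\<lambda>i. if i \<in> insert j S then h i + t *\<^sub>R v i else h i) = (H h t)(j := h j + t *\<^sub>R v j)"
         "(H h t)(j := h j) = H h t" "(H h t)(j := v j) = H (h(j := v j)) t"
      using insert.hyps(2) by (auto simp: H_def fun_eq_iff)
    then show ?thesis
      using linear_add[OF lin] linear_scale[OF lin] by simp
  qed
  have IH: "((\<lambda>t. D k x (H h t)) has_real_derivative (\<Sum>i\<in>S. D k x (h(i := v i)))) (at 0)" for h
    unfolding H_def by (rule insert.IH[OF \<open>S \<subseteq> {..<k}\<close>])
  obtain G' where "((\<lambda>t. D k x (H (h(j := v j)) t)) has_real_derivative G') (at 0)"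
    using IH by blast
  then have "((\<lambda>t. D k x (H h t) + t * D k x (H (h(j := v j)) t)) has_real_derivative
      (\<Sum>i\<in>S. D k x (h(i := v i))) + (1 * D k x (H (h(j := v j)) 0) + G' * 0)) (at 0)"
    by (intro DERIV_add DERIV_mult DERIV_ident IH)
  moreover have "H (h(j := v j)) 0 = h(j := v j)" by (auto simp: H_def fun_eq_iff)
  then have "(\<Sum>i\<in>S. D k x (h(i := v i))) + (1 * D k x (H (h(j := v j)) 0) + G' * 0)
      = (\<Sum>i\<in>insert j S. D k x (h(i := v i)))"
    using insert.hyps by simp
  ultimately show ?case unfolding split by metis
qed

lemma higher_derivs_diagonal_has_derivative:
  assumes hd: "higher_derivs g p D" and "k \<le> p"
  shows "((\<lambda>t. D k x (\<lambda>_. u + t *\<^sub>R v)) has_real_derivative real k * D k x ((\<lambda>_. u)(0 := v))) (at 0)"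
proof -
  have "((\<lambda>t. D k x (\<lambda>i. if i \<in> {..<k} then u + t *\<^sub>R v else u)) has_real_derivative
       (\<Sum>i\<in>{..<k}. D k x ((\<lambda>_. u)(i := v)))) (at 0)"
    using higher_derivs_shift_has_derivative[OF hd \<open>k \<le> p\<close>, of "{..<k}" x "\<lambda>_. u" "\<lambda>_. v"] by simp
  moreover have "D k x (\<lambda>i. if i \<in> {..<k} then u + t *\<^sub>R v else u) = D k x (\<lambda>_. u + t *\<^sub>R v)" for t
    by (rule higher_derivs_cong[OF hd \<open>k \<le> p\<close>]) simp
  moreover have "(\<Sum>i\<in>{..<k}. D k x ((\<lambda>_. u)(i := v))) = (\<Sum>i\<in>{..<k}. D k x ((\<lambda>_. u)(0 := v)))"
    by (intro sum.cong refl higher_derivs_slot_symmetric[OF hd \<open>k \<le> p\<close>]) simp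
  ultimately show ?thesis by simp
qed

lemma gradient_inner:
  fixes g :: "'a::euclidean_space \<Rightarrow> real"
  assumes "(g has_derivative g') (at y)"
  shows "gradient g y \<bullet> v = g' v"
proof -
  have "linear g'" using assms by (rule has_derivative_linear)
  then have "(\<lambda>h. h \<bullet> adjoint g' 1) = g'"
    by (simp add: adjoint_clauses fun_eq_iff)
  then have "(g has_derivative (\<lambda>h. adjoint g' 1 \<bullet> h)) (at y)"
    using assms by (simp add: inner_commute)
  then have "(g has_derivative (\<lambda>h. gradient g y \<bullet> h)) (at y)"
    unfolding gradient_def by (rule someI)
  then have "(\<lambda>h. gradient g y \<bullet> h) = g'"
    using assms by (rule has_derivative_unique)
  then show ?thesis by (rule fun_cong)
qed

lemma higher_derivs_gradient:
  assumes "higher_derivs g p D" and "0 < p"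
  shows "gradient g y \<bullet> v = D 1 y (h(0 := v))"
proof -
  have "(g has_derivative (\<lambda>v. D 1 y (h(0 := v)))) (at y)"
    using higher_derivs_has_derivative[OF assms, of h y] higher_derivs_zero[OF assms(1)] by simp
  then show ?thesis by (rule gradient_inner)
qed

lemma norm_power_Suc_has_derivative:
  fixes u v :: "'a::real_inner"
  assumes "n \<ge> 1"
  shows "((\<lambda>t. norm (u + t *\<^sub>R v) ^ Suc n) has_real_derivative
            real (Suc n) * norm u ^ (n - 1) * (u \<bullet> v)) (at 0)"
proof -
  obtain m where m: "n = Suc m" using assms by (cases n) auto
  show ?thesis
  proof (cases "u = 0")
    case True
    have "((\<lambda>t. norm (u + t *\<^sub>R v) ^ Suc n) has_real_derivative 0) (at 0)"
      unfolding CARAT_DERIV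
    proof (intro exI conjI allI)
      fix t :: real
      have "norm (u + t *\<^sub>R v) ^ Suc n = (\<bar>t\<bar> * \<bar>t\<bar>) * \<bar>t\<bar> ^ m * norm v ^ Suc n"
        using True m by (simp add: power_mult_distrib mult_ac)
      then show "norm (u + t *\<^sub>R v) ^ Suc n - norm (u + 0 *\<^sub>R v) ^ Suc n
          = (t * \<bar>t\<bar> ^ m * norm v ^ Suc n) * (t - 0)"
        using True by (simp add: abs_mult_self_eq mult_ac)
      show "isCont (\<lambda>t::real. t * \<bar>t\<bar> ^ m * norm v ^ Suc n) 0"
        by (intro continuous_intros)
    qed simp
    then show ?thesis using True by simp
  next
    case False
    have "((\<lambda>t. u + t *\<^sub>R v) has_derivative (\<lambda>d. d *\<^sub>R v)) (at 0)"
      by (auto intro!: derivative_eq_intros)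
    moreover have "(norm has_derivative (\<lambda>h. h \<bullet> sgn u)) (at (u + 0 *\<^sub>R v))"
      using has_derivative_norm[OF False] by simp
    ultimately have "((\<lambda>t. norm (u + t *\<^sub>R v)) has_derivative (\<lambda>d. (d *\<^sub>R v) \<bullet> sgn u)) (at 0)"
      by (rule has_derivative_compose)
    then have "((\<lambda>t. norm (u + t *\<^sub>R v)) has_real_derivative (v \<bullet> sgn u)) (at 0)"
      unfolding has_field_derivative_def
      by (rule has_derivative_eq_rhs) (simp add: fun_eq_iff)
    from DERIV_power[OF this, of "Suc n"]
    have "((\<lambda>t. norm (u + t *\<^sub>R v) ^ Suc n) has_real_derivative
        real (Suc n) * ((v \<bullet> sgn u) * norm u ^ n)) (at 0)"
      by simp
    moreover have "(v \<bullet> sgn u) * norm u ^ n = norm u ^ (n - 1) * (u \<bullet> v)"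
      using False m by (simp add: sgn_div_norm inner_commute)
    ultimately show ?thesis by (simp add: mult.assoc)
  qed
qed

lemma taylor_estimate_first_derivative:
  fixes u v :: "'a::euclidean_space"
  assumes hd: "higher_derivs g p D" and lip: "pth_deriv_lipschitz p D Lp" and "1 \<le> p"
  shows "\<bar>D 1 (x + u) ((\<lambda>_. u)(0 := v)) - (\<Sum>j\<le>p - 1. D (Suc j) x ((\<lambda>_. u)(0 := v)) / fact j)\<bar>
          \<le> Lp * norm u ^ p * norm v / fact p"
proof -
  let ?h = "(\<lambda>_. u)(0 := v)"
  obtain m where m: "p = Suc m" using \<open>1 \<le> p\<close> by (cases p) auto
  define f where "f j s = D (Suc j) (x + s *\<^sub>R u) ?h" for j s
  have "(f j has_real_derivative f (Suc j) s) (at s)" if "j < m" for j s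
  proof -
    have "Suc j < p" "Suc (Suc j) \<le> p" using that m by auto
    have "((\<lambda>s. x + s *\<^sub>R u) has_derivative (\<lambda>d. d *\<^sub>R u)) (at s)"
      by (auto intro!: derivative_eq_intros)
    from has_derivative_compose[OF this higher_derivs_has_derivative[OF hd \<open>Suc j < p\<close>]]
    have "(f j has_derivative (\<lambda>d. D (Suc (Suc j)) (x + s *\<^sub>R u) (?h(Suc j := d *\<^sub>R u)))) (at s)"
      unfolding f_def by simp
    moreover have "D (Suc (Suc j)) (x + s *\<^sub>R u) (?h(Suc j := d *\<^sub>R u)) = f (Suc j) s * d" for d
    proof -
      have "?h(Suc j := u) = ?h" by (auto simp: fun_eq_iff)
      then show ?thesis
        using linear_scale[OF higher_derivs_linear[OF hd \<open>Suc (Suc j) \<le> p\<close>, of "Suc j" "x + s *\<^sub>R u" ?h], of d u]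
        by (simp add: f_def)
    qed
    ultimately show ?thesis by (simp add: has_field_derivative_def)
  qed
  moreover have "\<bar>f m s - f m 0\<bar> \<le> (Lp * norm u ^ p * norm v) * s" if "0 \<le> s" for s
  proof -
    have "f m s = D p (x + s *\<^sub>R u) ?h" "f m 0 = D p x ?h" by (simp_all add: f_def m)
    then have "\<bar>f m s - f m 0\<bar> \<le> Lp * norm ((x + s *\<^sub>R u) - x) * (\<Prod>i<p. norm (?h i))"
      using lip unfolding pth_deriv_lipschitz_def by presburger
    also have "(\<Prod>i<p. norm (?h i)) = norm v * norm u ^ m"
      unfolding m prod.lessThan_Suc_shift by simp
    finally show ?thesis using that by (simp add: m mult_ac)
  qed
  ultimately have "\<bar>f 0 1 - (\<Sum>j\<le>m. f j 0 * 1 ^ j / fact j)\<bar> \<le> (Lp * norm u ^ p * norm v) * 1 ^ Suc m / fact (Suc m)"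
    by (intro taylor_remainder_lipschitz) auto
  then show ?thesis unfolding f_def m by simp
qed

lemma taylor_model_minimizer_first_order:
  fixes y x v :: "'a::euclidean_space"
  assumes hd: "higher_derivs g p D" and "1 \<le> p"
    and min: "\<And>z. taylor_approx p D y x + c * norm (y - x) ^ (p + 1) \<le> taylor_approx p D z x + c * norm (z - x) ^ (p + 1)"
  shows "(\<Sum>j\<le>p - 1. D (Suc j) x ((\<lambda>_. y - x)(0 := v)) / fact j)
          + c * (real (Suc p) * norm (y - x) ^ (p - 1) * ((y - x) \<bullet> v)) = 0"
proof -
  define u where "u = y - x"
  let ?h = "(\<lambda>_. u)(0 := v)"
  define M where "M t = taylor_approx p D (y + t *\<^sub>R v) x + c * norm (y + t *\<^sub>R v - x) ^ (p + 1)" for t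
  have M_eq: "M = (\<lambda>t. (\<Sum>k\<le>p. D k x (\<lambda>_. u + t *\<^sub>R v) / fact k) + c * norm (u + t *\<^sub>R v) ^ Suc p)"
    by (simp add: fun_eq_iff M_def taylor_approx_def u_def algebra_simps)
  have M': "(M has_real_derivative
      (\<Sum>k\<le>p. real k * D k x ?h / fact k) + c * (real (Suc p) * norm u ^ (p - 1) * (u \<bullet> v))) (at 0)"
    unfolding M_eq using \<open>1 \<le> p\<close>
    by (intro DERIV_add DERIV_sum DERIV_cdivide DERIV_cmult norm_power_Suc_has_derivative
        higher_derivs_diagonal_has_derivative[OF hd]) auto
  moreover have "M 0 \<le> M t" for t
    using min[of "y + t *\<^sub>R v"] by (simp add: M_def)
  ultimately have "(\<Sum>k\<le>p. real k * D k x ?h / fact k) + c * (real (Suc p) * norm u ^ (p - 1) * (u \<bullet> v)) = 0"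
    using DERIV_local_min[OF M' zero_less_one] by blast
  moreover obtain m where m: "p = Suc m" using \<open>1 \<le> p\<close> by (cases p) auto
  moreover have "real (Suc j) * D (Suc j) x ?h / fact (Suc j) = D (Suc j) x ?h / fact j" for j
    by (simp add: fact_Suc field_simps del: of_nat_Suc)
  ultimately show ?thesis
    unfolding u_def by (simp add: sum.atMost_Suc_shift del: sum.atMost_Suc)
qed

lemma norm_le_if_abs_inner_le:
  fixes N :: "'a::real_inner"
  assumes "0 \<le> K" and "\<And>v. \<bar>N \<bullet> v\<bar> \<le> K * norm v"
  shows "norm N \<le> K"
proof (cases "N = 0")
  case False
  have "norm N * norm N \<le> K * norm N"
    using assms(2)[of N] by (simp add: power2_norm_eq_inner[symmetric] power2_eq_square)
  then show ?thesis using False by simp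
qed (use assms in simp)

lemma taylor_model_minimizer_gradient_bound:
  fixes y x :: "'a::euclidean_space"
  assumes hd: "higher_derivs g p D" and "1 \<le> p"
    and lip: "pth_deriv_lipschitz p D Lp" and "0 \<le> Lp"
    and min: "\<And>z. taylor_approx p D y x + c * norm (y - x) ^ (p + 1) \<le> taylor_approx p D z x + c * norm (z - x) ^ (p + 1)"
  shows "norm (gradient g y + (c * (p + 1) * norm (y - x) ^ (p - 1)) *\<^sub>R (y - x))
           \<le> Lp * norm (y - x) ^ p / fact p"
proof (rule norm_le_if_abs_inner_le)
  fix v
  let ?h = "(\<lambda>_. y - x)(0 := v)"
  have "gradient g y \<bullet> v = D 1 (x + (y - x)) ?h"
    using higher_derivs_gradient[OF hd] \<open>1 \<le> p\<close> by simp
  then have "(gradient g y + (c * (p + 1) * norm (y - x) ^ (p - 1)) *\<^sub>R (y - x)) \<bullet> v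
      = D 1 (x + (y - x)) ?h - (\<Sum>j\<le>p - 1. D (Suc j) x ?h / fact j)"
    using taylor_model_minimizer_first_order[OF hd \<open>1 \<le> p\<close> min, of v]
    by (simp add: inner_add_left algebra_simps)
  then show "\<bar>(gradient g y + (c * (p + 1) * norm (y - x) ^ (p - 1)) *\<^sub>R (y - x)) \<bullet> v\<bar>
      \<le> Lp * norm (y - x) ^ p / fact p * norm v"
    using taylor_estimate_first_derivative[OF hd lip \<open>1 \<le> p\<close>, of x "y - x" v] by simp
qed (use \<open>0 \<le> Lp\<close> in simp)

theorem mainTheorem19:
  fixes g :: "'a::euclidean_space \<Rightarrow> real"
    and D :: "nat \<Rightarrow> 'a \<Rightarrow> (nat \<Rightarrow> 'a) \<Rightarrow> real"
    and T :: "'a \<Rightarrow> 'a"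
    and p :: nat and Lp L :: real
  assumes "p \<ge> 1"
    and "higher_derivs g p D"
    and "Lp > 0"
    and "pth_deriv_lipschitz p D Lp"
    and "L \<ge> 0"
    and "\<And>x z. taylor_approx p D (T x) x + (Lp + L) / fact p * norm (T x - x) ^ (p + 1)
               \<le> taylor_approx p D z x + (Lp + L) / fact p * norm (z - x) ^ (p + 1)"
  shows "approx_prox_oracle g (\<lambda>s. (Lp + L) * (p + 1) / fact p * s ^ (p - 1))
           (inverse (1 + p) * inverse (1 + L / Lp)) 0 T"
  unfolding approx_prox_oracle_def Let_def
proof
  fix x
  define r where "r = norm (T x - x)"
  have "norm (gradient g (T x) + ((Lp + L) / fact p * (p + 1) * r ^ (p - 1)) *\<^sub>R (T x - x))
      \<le> Lp * r ^ p / fact p"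
    unfolding r_def using assms
    by (intro taylor_model_minimizer_gradient_bound[where D = D]) auto
  moreover have "Lp * r ^ p / fact p
      = inverse (1 + p) * inverse (1 + L / Lp) * ((Lp + L) * (p + 1) / fact p * r ^ (p - 1)) * r + 0"
  proof -
    have cancel: "inverse a * (Lp / c) * (c * a / F * q) * r = Lp * (q * r) / F"
      if "a \<noteq> 0" "c \<noteq> 0" "F \<noteq> 0" for a c F q :: real
      using that by (simp add: field_simps)
    have "r ^ p = r ^ (p - 1) * r" using \<open>p \<ge> 1\<close> by (simp add: power_eq_if)
    moreover have "inverse (1 + L / Lp) = Lp / (Lp + L)" using \<open>Lp > 0\<close> \<open>L \<ge> 0\<close> by (simp add: field_simps)
    moreover have "Lp + L \<noteq> 0" using \<open>Lp > 0\<close> \<open>L \<ge> 0\<close> by linarith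
    ultimately show ?thesis
      using cancel[of "1 + real p" "Lp + L" "fact p" "r ^ (p - 1)"] by (simp add: add.commute)
  qed
  ultimately show "norm (gradient g (T x) + ((Lp + L) * (p + 1) / fact p * r ^ (p - 1)) *\<^sub>R (T x - x))
      \<le> inverse (1 + p) * inverse (1 + L / Lp) * ((Lp + L) * (p + 1) / fact p * r ^ (p - 1)) * r + 0"
    by simp
qed

end
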